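(* Assume $\delta=d$ and $\gamma\ge1$. Then on $A_p\times\mathbb{C}$ the limit $$G_f^\alpha(z,w)=\lim_{n\to\infty}\frac{1}{d^n}\log^+\max\{|p^n(z)|^{\max\{\alpha,0\}},|Q_z^n(w)|\}$$ exists in $[0,+\infty]$ and $$G_f^\alpha(z,w)=\begin{cases}+\infty & (z,w)\in A_f,\\ \max\{\alpha,0\}\,G_p(z) & (z,w)\in B_f.\end{cases}$$
   Context: Let $p(z)=z^d+O(z^{d-1})$ be a monic polynomial of degree $\delta=d\ge 2$, and let $q(z,w)=b(z)w^d+(\text{terms of lower degree in } w)$ be a polynomial with $\deg_w q=d$, where $b$ is a monic polynomial of degree $\gamma$. Let $f(z,w)=(p(z),q(z,w))$. Write $Q_z^n=q_{p^{n-1}(z)}\circ\cdots\circ q_{p(z)}\circ q_z$ with $q_z=q(z,\cdot)$, so $f^n(z,w)=(p^n(z),Q_z^n(w))$. Let $A_p=\{z: p^n(z)\to\infty\}$ and $G_p(z)=\lim_n d^{-n}\log^+|p^n(z)|$. Define $\alpha=\max\{(n_j-\gamma)/(d-m_j)\}$ over monomials $z^{n_j}w^{m_j}$ appearing in $q$ with nonzero coefficient and $m_j<d$, and $\alpha=-\infty$ if $q=b(z)w^d$ (then $\max\{\alpha,0\}=0$). Let $W_R=\{(z,w):|z|>R,\ |w|>R|z|^\alpha\}$ (if $\alpha=-\infty$: $\{|z|>R,\ w\ne0\}$), fix $R>1$ large enough that $f(W_R)\subset W_R$ and $W_R\subset A_p\times\mathbb{C}$, and set $A_f=\bigcup_{n\ge0}f^{-n}(W_R)$,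 $B_f=(A_p\times\mathbb{C})\setminus A_f$. *)

theory Defs
  imports "HOL-Analysis.Analysis" "HOL-Computational_Algebra.Polynomial"
begin

text \<open>The polynomial q(z,w) is represented by its coefficients as polynomials in z:
  q(z,w) = sum_{j<=d} B_j(z) w^j, with B_d = b.\<close>

definition qfun :: "(nat \<Rightarrow> complex poly) \<Rightarrow> nat \<Rightarrow> complex \<Rightarrow> complex \<Rightarrow> complex" where
  "qfun B d z w = (\<Sum>j\<le>d. poly (B j) z * w ^ j)"

definition skew :: "complex poly \<Rightarrow> (nat \<Rightarrow> complex poly) \<Rightarrow> nat \<Rightarrow> complex \<times> complex \<Rightarrow> complex \<times> complex" where
  "skew p B d = (\<lambda>(z, w). (poly p z, qfun B d z w))"

definition logplus :: "real \<Rightarrow> real" where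
  "logplus x = max 0 (ln x)"

definition escape_set :: "complex poly \<Rightarrow> complex set" where
  "escape_set p = {z. filterlim (\<lambda>n. (poly p ^^ n) z) at_infinity sequentially}"

definition green_p :: "complex poly \<Rightarrow> complex \<Rightarrow> real" where
  "green_p p z = lim (\<lambda>n. logplus (norm ((poly p ^^ n) z)) / real (degree p) ^ n)"

definition low_monos :: "(nat \<Rightarrow> complex poly) \<Rightarrow> nat \<Rightarrow> (nat \<times> nat) set" where
  "low_monos B d = {(n, m). m < d \<and> coeff (B m) n \<noteq> 0}"

definition alpha :: "(nat \<Rightarrow> complex poly) \<Rightarrow> nat \<Rightarrow> ereal" where
  "alpha B d = (if low_monos B d = {} then -\<infinity>
     else ereal (Max ((\<lambda>(n, m). (real n - real (degree (B d))) / (real d - real m)) ` low_monos B d)))"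

definition alpha_plus :: "(nat \<Rightarrow> complex poly) \<Rightarrow> nat \<Rightarrow> real" where
  "alpha_plus B d = real_of_ereal (max (alpha B d) 0)"

definition W_R :: "(nat \<Rightarrow> complex poly) \<Rightarrow> nat \<Rightarrow> real \<Rightarrow> (complex \<times> complex) set" where
  "W_R B d R = (case alpha B d of
       ereal a \<Rightarrow> {(z, w). norm z > R \<and> norm w > R * norm z powr a}
     | _ \<Rightarrow> {(z, w). norm z > R \<and> w \<noteq> 0})"

definition A_f :: "complex poly \<Rightarrow> (nat \<Rightarrow> complex poly) \<Rightarrow> nat \<Rightarrow> real \<Rightarrow> (complex \<times> complex) set" where
  "A_f p B d R = (\<Union>n. (skew p B d ^^ n) -` W_R B d R)"

definition B_f :: "complex poly \<Rightarrow> (nat \<Rightarrow> complex poly) \<Rightarrow> nat \<Rightarrow> real \<Rightarrow> (complex \<times> complex) set" where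
  "B_f p B d R = (escape_set p \<times> UNIV) - A_f p B d R"

text \<open>x^a with the convention 0^0 = 1 (Isabelle's powr has 0 powr 0 = 0).\<close>
definition rpow :: "real \<Rightarrow> real \<Rightarrow> real" where
  "rpow x a = (if x = 0 then (if a = 0 then 1 else 0) else x powr a)"

end

theory Submission
  imports Defs
begin

(* Write z_n = p^n(z) and w_n = Q_z^n(w).  The proof rests on two estimates.
   (1) Base dynamics: on an escaping orbit |z_{n+1}| is comparable to |z_n|^d, so
       |ln|z_{n+1}| - d ln|z_n|| <= ln 2 eventually.  A general telescoping lemma then
       shows that ln|z_n| / d^n converges (to the Green function G_p(z)), and a general
       geometric lower-bound lemma shows ln|z_n| >= c d^n with c > 0.
   (2) Fibre dynamics on W_R: by the definition of alpha, every lower-order monomial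
       z^n w^m of q is dominated there by |z|^gamma |w|^d / R, hence
       |q(z,w)| >= |z| |w|^d / 4 once R is large (this uses gamma >= 1).
   On B_f the orbit never enters W_R, so |w_n| <= R |z_n|^alpha and the normalized
   height is squeezed between max(alpha,0) ln|z_n| / d^n and that plus ln R / d^n.
   On A_f the orbit stays in the invariant set W_R from some time on, and (2) together
   with ln|z_n| >= c d^n makes ln|w_n| / d^n grow by at least c/(2d) per step. *)

(* If s_{n+1} = d s_n + O(1) with d > 1, then s_n / d^n converges: its increments are
   bounded by a geometric series.  Applied to s_n = ln |p^n(z)| this gives G_p. *)
lemma convergent_of_log_recursion:
  fixes s :: "nat \<Rightarrow> real" and d C :: real
  assumes d: "d > 1" and step: "\<And>n. n \<ge> k \<Longrightarrow> \<bar>s (Suc n) - d * s n\<bar> \<le> C"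
  shows "convergent (\<lambda>n. s n / d ^ n)"
proof -
  define t where "t = (\<lambda>n. s n / d ^ n)"
  have diff: "norm (t (Suc n) - t n) \<le> (C / d) * (1 / d) ^ n" if "n \<ge> k" for n
  proof -
    have "t (Suc n) - t n = (s (Suc n) - d * s n) / d ^ Suc n"
      unfolding t_def using d by (simp add: field_simps)
    then have "norm (t (Suc n) - t n) = \<bar>s (Suc n) - d * s n\<bar> / d ^ Suc n"
      using d by simp
    also have "\<dots> \<le> C / d ^ Suc n" using step[OF that] d by (simp add: divide_right_mono)
    also have "\<dots> = (C / d) * (1 / d) ^ n" by (simp add: power_divide)
    finally show ?thesis .
  qed
  have "summable (\<lambda>n. (C / d) * (1 / d) ^ n)"
    using d by (intro summable_mult summable_geometric) simp
  then have "summable (\<lambda>n. t (Suc n) - t n)"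
    by (rule summable_comparison_test'[where N = k]) (rule diff)
  then have "(\<lambda>n. t n - t 0) \<longlonglongrightarrow> (\<Sum>n. t (Suc n) - t n)"
    using summable_LIMSEQ by (fastforce simp: sum_lessThan_telescope)
  then have "(\<lambda>n. (t n - t 0) + t 0) \<longlonglongrightarrow> (\<Sum>n. t (Suc n) - t n) + t 0"
    by (intro tendsto_add tendsto_const)
  then show ?thesis unfolding t_def convergent_def by auto
qed

lemma squeeze_with_vanishing_error:
  fixes V G :: "nat \<Rightarrow> real" and d :: real
  assumes G: "G \<longlonglongrightarrow> g" and d: "d > 1"
    and bounds: "\<And>n. n \<ge> k \<Longrightarrow> b * G n \<le> V n \<and> V n \<le> C / d ^ n + b * G n"
  shows "V \<longlonglongrightarrow> b * g"
proof (rule real_tendsto_sandwich)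
  show "(\<lambda>n. b * G n) \<longlonglongrightarrow> b * g" by (intro tendsto_mult tendsto_const G)
  have "(\<lambda>n. C / d ^ n) \<longlonglongrightarrow> 0" using d by (rule LIMSEQ_divide_realpow_zero)
  from tendsto_add[OF this tendsto_mult[OF tendsto_const G]]
  show "(\<lambda>n. C / d ^ n + b * G n) \<longlonglongrightarrow> b * g" by simp
qed (use bounds in \<open>auto simp: eventually_sequentially\<close>)

lemma geometric_lower_bound:
  fixes t :: "nat \<Rightarrow> real" and d :: real
  assumes "d \<ge> 0" and step: "\<And>n. n \<ge> k \<Longrightarrow> d * t n \<le> t (Suc n)" and "k \<le> n"
  shows "d ^ (n - k) * t k \<le> t n"
  using \<open>k \<le> n\<close>
proof (induction n rule: dec_induct)
  case base then show ?case by simp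
next
  case (step n)
  have "d ^ (Suc n - k) * t k = d * (d ^ (n - k) * t k)"
    using step.hyps(1) by (simp add: Suc_diff_le)
  also have "\<dots> \<le> d * t n" using step.IH \<open>d \<ge> 0\<close> by (rule mult_left_mono)
  also have "\<dots> \<le> t (Suc n)" using step.hyps(1) by (rule assms(2))
  finally show ?case .
qed

lemma tendsto_at_top_of_uniform_increments:
  fixes u :: "nat \<Rightarrow> real"
  assumes "e > 0" and step: "\<And>n. n \<ge> N \<Longrightarrow> u n + e \<le> u (Suc n)"
  shows "filterlim u at_top sequentially"
proof -
  have linear: "u N + real (n - N) * e \<le> u n" if "N \<le> n" for n
    using that
  proof (induction n rule: dec_induct)
    case base then show ?case by simp
  next
    case (step n)
    then show ?case using assms(2)[OF step.hyps(1)] by (simp add: Suc_diff_le algebra_simps)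
  qed
  show ?thesis unfolding filterlim_at_top eventually_sequentially
  proof
    fix r :: real
    obtain j :: nat where j: "(r - u N) / e < real j" using reals_Archimedean2 by blast
    have "r \<le> u n" if "n \<ge> N + j" for n
    proof -
      have "r \<le> u N + real j * e" using j \<open>e > 0\<close> by (simp add: field_simps)
      also have "\<dots> \<le> u N + real (n - N) * e" using that \<open>e > 0\<close> by simp
      also have "\<dots> \<le> u n" using that by (intro linear) simp
      finally show ?thesis .
    qed
    then show "\<exists>M. \<forall>n\<ge>M. r \<le> u n" by blast
  qed
qed


lemma poly_norm_le_coeff_sum:
  fixes q :: "complex poly" assumes "norm z \<ge> 1"
  shows "norm (poly q z) \<le> (\<Sum>i\<le>degree q. norm (coeff q i)) * norm z ^ degree q"
proof -
  have "norm (poly q z) \<le> (\<Sum>i\<le>degree q. norm (coeff q i * z ^ i))"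
    unfolding poly_altdef by (rule norm_sum)
  also have "\<dots> \<le> (\<Sum>i\<le>degree q. norm (coeff q i) * norm z ^ degree q)"
    by (rule sum_mono)
       (auto simp: norm_mult norm_power intro!: mult_left_mono power_increasing assms)
  finally show ?thesis by (simp add: sum_distrib_right)
qed

lemma monic_poly_remainder_bound:
  fixes q :: "complex poly" assumes "lead_coeff q = 1" "degree q = k"
  shows "\<exists>C\<ge>0. \<forall>z. norm z \<ge> 1 \<longrightarrow> norm (poly q z - z ^ k) \<le> C * norm z ^ (k - 1)"
proof (intro exI conjI allI impI)
  define C where "C = (\<Sum>i<k. norm (coeff q i))"
  show "C \<ge> 0" unfolding C_def by (simp add: sum_nonneg)
  fix z :: complex assume z: "norm z \<ge> 1"
  have "poly q z - z ^ k = (\<Sum>i<k. coeff q i * z ^ i)"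
    using assms by (simp add: poly_altdef lessThan_Suc_atMost[symmetric])
  then have "norm (poly q z - z ^ k) \<le> (\<Sum>i<k. norm (coeff q i) * norm z ^ (k - 1))"
    by (auto intro!: order_trans[OF norm_sum sum_mono] mult_left_mono power_increasing z
             simp: norm_mult norm_power)
  then show "norm (poly q z - z ^ k) \<le> C * norm z ^ (k - 1)"
    by (simp add: C_def sum_distrib_right)
qed

lemma monic_poly_comparable_to_power:
  fixes q :: "complex poly" assumes "lead_coeff q = 1" "degree q = k" "k \<ge> 1"
  shows "\<exists>R\<ge>1. \<forall>z. norm z \<ge> R \<longrightarrow>
           norm z ^ k / 2 \<le> norm (poly q z) \<and> norm (poly q z) \<le> 2 * norm z ^ k"
proof -
  obtain C where C: "C \<ge> 0" "\<And>z. norm z \<ge> 1 \<Longrightarrow> norm (poly q z - z ^ k) \<le> C * norm z ^ (k - 1)"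
    using monic_poly_remainder_bound[OF assms(1,2)] by blast
  define R where "R = max 1 (2 * C)"
  have "norm z ^ k / 2 \<le> norm (poly q z) \<and> norm (poly q z) \<le> 2 * norm z ^ k"
    if z: "norm z \<ge> R" for z :: complex
  proof -
    have z1: "norm z \<ge> 1" and z2: "2 * C \<le> norm z" using z unfolding R_def by auto
    have "norm z ^ k = norm z * norm z ^ (k - 1)" using assms(3) by (cases k) auto
    moreover have "2 * C * norm z ^ (k - 1) \<le> norm z * norm z ^ (k - 1)"
      by (rule mult_right_mono[OF z2]) simp
    ultimately have "norm (poly q z - z ^ k) \<le> norm z ^ k / 2" using C(2)[OF z1] by linarith
    moreover have "norm (z ^ k) \<le> norm (poly q z) + norm (z ^ k - poly q z)"
      and "norm (poly q z) \<le> norm (z ^ k) + norm (poly q z - z ^ k)"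
      by (rule norm_triangle_sub)+
    ultimately show ?thesis by (simp add: norm_power norm_minus_commute)
  qed
  moreover have "R \<ge> 1" unfolding R_def by simp
  ultimately show ?thesis by blast
qed

lemma escape_set_eventually_ge:
  assumes "z \<in> escape_set p"
  shows "\<exists>k. \<forall>n\<ge>k. M \<le> norm ((poly p ^^ n) z)"
proof -
  have "filterlim (\<lambda>n. norm ((poly p ^^ n) z)) at_top sequentially"
    using assms filterlim_at_infinity_imp_norm_at_top unfolding escape_set_def by auto
  then show ?thesis by (simp add: filterlim_at_top eventually_sequentially)
qed

lemma escaping_orbit_log_step:
  assumes "d \<ge> 2" "degree p = d" "lead_coeff p = 1" "z \<in> escape_set p"
  shows "\<exists>k. \<forall>n\<ge>k. 1 \<le> norm ((poly p ^^ n) z) \<and> M \<le> norm ((poly p ^^ n) z) \<and>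
           \<bar>ln (norm ((poly p ^^ Suc n) z)) - real d * ln (norm ((poly p ^^ n) z))\<bar> \<le> ln 2"
proof -
  obtain R where R: "R \<ge> 1"
    "\<And>x. norm x \<ge> R \<Longrightarrow> norm x ^ d / 2 \<le> norm (poly p x) \<and> norm (poly p x) \<le> 2 * norm x ^ d"
    using monic_poly_comparable_to_power[OF assms(3,2)] assms(1) by auto
  obtain k where k: "\<forall>n\<ge>k. max R (max 1 M) \<le> norm ((poly p ^^ n) z)"
    using escape_set_eventually_ge[OF assms(4)] by blast
  have "\<bar>ln (norm ((poly p ^^ Suc n) z)) - real d * ln (norm ((poly p ^^ n) z))\<bar> \<le> ln 2"
    if n: "n \<ge> k" for n
  proof -
    define x where "x = norm ((poly p ^^ n) z)"
    define y where "y = norm ((poly p ^^ Suc n) z)"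
    have x1: "x \<ge> 1" and xR: "x \<ge> R" using k n unfolding x_def by auto
    have xy: "x ^ d / 2 \<le> y" "y \<le> 2 * x ^ d"
      using R(2)[of "(poly p ^^ n) z"] xR unfolding x_def y_def by auto
    have pos: "x ^ d / 2 > 0" using x1 by simp
    have "ln (x ^ d / 2) \<le> ln y" "ln y \<le> ln (2 * x ^ d)" using xy pos by simp_all
    moreover have "ln (x ^ d / 2) = real d * ln x - ln 2" "ln (2 * x ^ d) = ln 2 + real d * ln x"
      using x1 by (simp_all add: ln_div ln_mult ln_realpow)
    ultimately show ?thesis unfolding x_def y_def by linarith
  qed
  then show ?thesis using k by auto
qed

(* The Green function is the limit of ln|p^n(z)| / d^n on the escaping set
   (log^+ and ln agree once |p^n(z)| >= 1). *)
lemma green_p_limit: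
  assumes "d \<ge> 2" "degree p = d" "lead_coeff p = 1" "z \<in> escape_set p"
  shows "(\<lambda>n. ln (norm ((poly p ^^ n) z)) / real d ^ n) \<longlonglongrightarrow> green_p p z"
proof -
  obtain k where k: "\<forall>n\<ge>k. 1 \<le> norm ((poly p ^^ n) z) \<and>
      \<bar>ln (norm ((poly p ^^ Suc n) z)) - real d * ln (norm ((poly p ^^ n) z))\<bar> \<le> ln 2"
    using escaping_orbit_log_step[OF assms, where M = 1] by blast
  have "convergent (\<lambda>n. ln (norm ((poly p ^^ n) z)) / real d ^ n)"
    using k assms(1) by (intro convergent_of_log_recursion[where k = k and C = "ln 2"]) auto
  then obtain L where L: "(\<lambda>n. ln (norm ((poly p ^^ n) z)) / real d ^ n) \<longlonglongrightarrow> L"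
    unfolding convergent_def by blast
  have "eventually (\<lambda>n. ln (norm ((poly p ^^ n) z)) / real d ^ n
                      = logplus (norm ((poly p ^^ n) z)) / real d ^ n) sequentially"
    unfolding eventually_sequentially logplus_def using k by (intro exI[of _ k]) auto
  then have "(\<lambda>n. logplus (norm ((poly p ^^ n) z)) / real d ^ n) \<longlonglongrightarrow> L"
    using L by (rule Lim_transform_eventually[rotated])
  then have "green_p p z = L" unfolding green_p_def assms(2) by (rule limI)
  then show ?thesis using L by simp
qed

(* On an escaping orbit ln|p^n(z)| grows at least like c d^n for some c > 0:
   t_n = ln|z_n| - ln 2 satisfies t_{n+1} >= d t_n since d >= 2, and t_k >= ln 2. *)
lemma escaping_orbit_log_growth:
  assumes "d \<ge> 2" "degree p = d" "lead_coeff p = 1" "z \<in> escape_set p"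
  shows "\<exists>c>0. \<exists>k. \<forall>n\<ge>k. c * real d ^ n \<le> ln (norm ((poly p ^^ n) z))"
proof -
  obtain k where k: "\<forall>n\<ge>k. 4 \<le> norm ((poly p ^^ n) z) \<and>
      \<bar>ln (norm ((poly p ^^ Suc n) z)) - real d * ln (norm ((poly p ^^ n) z))\<bar> \<le> ln 2"
    using escaping_orbit_log_step[OF assms, where M = 4] by blast
  define t where "t = (\<lambda>n. ln (norm ((poly p ^^ n) z)) - ln 2)"
  have d0: "real d > 0" using assms(1) by simp
  have ln4: "ln (4 :: real) = 2 * ln 2"
    using ln_realpow[of 2 2] by simp
  have "4 \<le> norm ((poly p ^^ k) z)" using k by auto
  then have "ln 4 \<le> ln (norm ((poly p ^^ k) z))" by (subst ln_le_cancel_iff) auto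
  then have tk: "ln 2 \<le> t k" using ln4 unfolding t_def by simp
  have "real d * t n \<le> t (Suc n)" if "n \<ge> k" for n
  proof -
    have "\<bar>ln (norm ((poly p ^^ Suc n) z)) - real d * ln (norm ((poly p ^^ n) z))\<bar> \<le> ln 2"
      using k that by blast
    moreover have "2 * ln 2 \<le> real d * ln 2" using assms(1) by (intro mult_right_mono) auto
    ultimately show ?thesis unfolding t_def right_diff_distrib abs_le_iff by linarith
  qed
  then have geom: "real d ^ (n - k) * t k \<le> t n" if "n \<ge> k" for n
    using geometric_lower_bound[of "real d" k t n] that by simp
  have "(ln 2 / real d ^ k) * real d ^ n \<le> ln (norm ((poly p ^^ n) z))" if "n \<ge> k" for n
  proof -
    have "(ln 2 / real d ^ k) * real d ^ n = real d ^ (n - k) * ln 2"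
      using that d0 by (simp add: power_diff)
    also have "\<dots> \<le> real d ^ (n - k) * t k" using tk by (intro mult_left_mono) auto
    also have "\<dots> \<le> t n" using geom[OF that] .
    also have "\<dots> \<le> ln (norm ((poly p ^^ n) z))" unfolding t_def by simp
    finally show ?thesis .
  qed
  moreover have "ln 2 / real d ^ k > 0" using d0 by simp
  ultimately show ?thesis by blast
qed


lemma W_R_norms:
  assumes "(z, w) \<in> W_R B d R" "R \<ge> 0"
  shows "norm z > R \<and> w \<noteq> 0"
proof (cases "alpha B d")
  case (real a)
  then have "norm z > R" "norm w > R * norm z powr a" using assms(1) by (auto simp: W_R_def)
  moreover have "R * norm z powr a \<ge> 0" using assms(2) by simp
  ultimately show ?thesis by auto
qed (use assms(1) in \<open>auto simp: W_R_def\<close>)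

lemma low_monos_finite: "finite (low_monos B d)"
proof (rule finite_subset)
  show "low_monos B d \<subseteq> (\<Union>m<d. {..degree (B m)} \<times> {m})"
    by (auto simp: low_monos_def intro: le_degree)
qed auto

lemma alpha_ge_slope:
  assumes "m < d" "B m \<noteq> 0"
  shows "\<exists>a. alpha B d = ereal a \<and>
           (real (degree (B m)) - real (degree (B d))) / (real d - real m) \<le> a"
proof -
  define S where "S = (\<lambda>(n, m). (real n - real (degree (B d))) / (real d - real m)) ` low_monos B d"
  have mem: "(degree (B m), m) \<in> low_monos B d" using assms by (simp add: low_monos_def)
  then have "(real (degree (B m)) - real (degree (B d))) / (real d - real m) \<in> S"
    unfolding S_def by force
  moreover have "finite S" unfolding S_def using low_monos_finite by simp
  moreover have "alpha B d = ereal (Max S)" using mem unfolding alpha_def S_def by auto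
  ultimately show ?thesis by auto
qed

(* The inequality behind the choice of alpha: if (n - g) <= a (d - m), x > R >= 1 and
   y > R x^a, then x^n y^m <= x^g y^d / R. *)
lemma monomial_domination:
  fixes x y R a :: real
  assumes x: "x > R" and R: "R \<ge> 1" and y: "y > R * x powr a"
    and slope: "real n - real g \<le> a * (real d - real m)" and m: "m < d"
  shows "x ^ n * y ^ m \<le> x ^ g * y ^ d / R"
proof -
  have x0: "x > 0" "x \<ge> 1" using x R by auto
  have "R * x powr a > 0" using x0 R by simp
  then have y0: "y > 0" using y by linarith
  have "R * x powr (real n - real g) \<le> R ^ (d - m) * x powr (a * real (d - m))"
  proof (rule mult_mono)
    show "R \<le> R ^ (d - m)" using power_increasing[of 1 "d - m" R] R m by simp
    show "x powr (real n - real g) \<le> x powr (a * real (d - m))"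
      using slope m x0 by (intro powr_mono) (auto simp: of_nat_diff)
  qed (use R in auto)
  also have "\<dots> = (R * x powr a) ^ (d - m)"
    using x0 by (simp add: power_mult_distrib powr_realpow[symmetric] powr_powr)
  also have "\<dots> \<le> y ^ (d - m)" using y \<open>R * x powr a > 0\<close> by (intro power_mono) auto
  finally have Y: "R * x powr (real n - real g) \<le> y ^ (d - m)" .
  have "x ^ n * y ^ m * R = x ^ g * y ^ m * (R * x powr (real n - real g))"
    using x0 by (simp add: powr_realpow[symmetric] powr_add[symmetric] algebra_simps)
  also have "\<dots> \<le> x ^ g * y ^ m * y ^ (d - m)" using Y y0 x0 by (intro mult_left_mono) auto
  also have "\<dots> = x ^ g * y ^ d" using m by (simp add: power_add[symmetric])
  finally show ?thesis using R by (simp add: field_simps)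
qed

definition low_coeff_mass :: "(nat \<Rightarrow> complex poly) \<Rightarrow> nat \<Rightarrow> real" where
  "low_coeff_mass B d = (\<Sum>m<d. \<Sum>i\<le>degree (B m). norm (coeff (B m) i))"

lemma low_order_part_bound:
  assumes R: "R \<ge> 1" and zw: "(z, w) \<in> W_R B d R"
  shows "norm (\<Sum>m<d. poly (B m) z * w ^ m)
           \<le> low_coeff_mass B d * (norm z ^ degree (B d) * norm w ^ d / R)"
proof -
  define X where "X = norm z ^ degree (B d) * norm w ^ d / R"
  have term_bound: "norm (poly (B m) z * w ^ m) \<le> (\<Sum>i\<le>degree (B m). norm (coeff (B m) i)) * X"
    if m: "m < d" for m
  proof (cases "B m = 0")
    case False
    obtain a where a: "alpha B d = ereal a"
        "(real (degree (B m)) - real (degree (B d))) / (real d - real m) \<le> a"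
      using alpha_ge_slope[of m d B, OF m False] by blast
    have zw': "norm z > R" "norm w > R * norm z powr a" using zw a(1) by (auto simp: W_R_def)
    have "real (degree (B m)) - real (degree (B d)) \<le> a * (real d - real m)"
      using a(2) m by (simp add: pos_divide_le_eq)
    then have mono: "norm z ^ degree (B m) * norm w ^ m \<le> X"
      unfolding X_def by (rule monomial_domination[OF zw'(1) R zw'(2) _ m])
    define C where "C = (\<Sum>i\<le>degree (B m). norm (coeff (B m) i))"
    have "norm (poly (B m) z) \<le> C * norm z ^ degree (B m)"
      unfolding C_def using poly_norm_le_coeff_sum[of z "B m"] zw'(1) R by simp
    then have "norm (poly (B m) z * w ^ m) \<le> C * (norm z ^ degree (B m) * norm w ^ m)"
      by (simp add: norm_mult norm_power mult.assoc[symmetric] mult_right_mono)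
    also have "\<dots> \<le> C * X" using mono by (intro mult_left_mono) (auto simp: C_def sum_nonneg)
    finally show ?thesis unfolding C_def .
  qed simp
  have "norm (\<Sum>m<d. poly (B m) z * w ^ m) \<le> (\<Sum>m<d. norm (poly (B m) z * w ^ m))"
    by (rule norm_sum)
  also have "\<dots> \<le> (\<Sum>m<d. (\<Sum>i\<le>degree (B m). norm (coeff (B m) i)) * X)"
    using term_bound by (intro sum_mono) auto
  finally show ?thesis unfolding low_coeff_mass_def X_def sum_distrib_right .
qed

(* The leading
   coefficient b contributes at least |z|^gamma |w|^d / 2, the lower part at most a quarter
   of that, and gamma >= 1 gives |z|^gamma >= |z|. *)
lemma qfun_lower_bound:
  assumes deg: "degree (B d) \<ge> 1" and R: "R \<ge> 1" "4 * low_coeff_mass B d \<le> R"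
    and lead: "\<And>x. R \<le> norm x \<Longrightarrow> norm x ^ degree (B d) / 2 \<le> norm (poly (B d) x)"
    and zw: "(z, w) \<in> W_R B d R"
  shows "norm z * norm w ^ d / 4 \<le> norm (qfun B d z w)"
proof -
  have z: "norm z > R" and w: "w \<noteq> 0" using W_R_norms[OF zw] R(1) by auto
  define X where "X = norm z ^ degree (B d) * norm w ^ d"
  have "{..d} = insert d {..<d}" by auto
  then have split: "qfun B d z w = poly (B d) z * w ^ d + (\<Sum>m<d. poly (B m) z * w ^ m)"
    unfolding qfun_def by simp
  have "norm (\<Sum>m<d. poly (B m) z * w ^ m) \<le> low_coeff_mass B d * (X / R)"
    using low_order_part_bound[OF R(1) zw] by (simp add: X_def)
  also have "\<dots> \<le> X / 4"
    using R mult_right_mono[OF R(2), of X] by (simp add: X_def field_simps)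
  finally have low: "norm (\<Sum>m<d. poly (B m) z * w ^ m) \<le> X / 4" .
  have "X / 2 \<le> norm (poly (B d) z * w ^ d)"
    using mult_right_mono[OF lead[of z], of "norm w ^ d"] z
    by (simp add: X_def norm_mult norm_power)
  moreover have "norm (poly (B d) z * w ^ d) - norm (\<Sum>m<d. poly (B m) z * w ^ m)
                   \<le> norm (qfun B d z w)"
    unfolding split by (rule norm_diff_ineq)
  moreover have "norm z * norm w ^ d \<le> X"
    using power_increasing[OF deg, of "norm z"] z R(1) by (simp add: X_def mult_right_mono)
  ultimately show ?thesis using low by linarith
qed


lemma skew_iter_fst: "fst ((skew p B d ^^ n) x) = (poly p ^^ n) (fst x)"
  by (induction n) (auto simp: skew_def split: prod.splits)

lemma skew_iter_snd_Suc:
  "snd ((skew p B d ^^ Suc n) x) = qfun B d (fst ((skew p B d ^^ n) x)) (snd ((skew p B d ^^ n) x))"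
  by (simp add: skew_def split: prod.splits)

definition normalized_height ::
  "complex poly \<Rightarrow> (nat \<Rightarrow> complex poly) \<Rightarrow> nat \<Rightarrow> complex \<times> complex \<Rightarrow> nat \<Rightarrow> real" where
  "normalized_height p B d x n =
     logplus (max (rpow (norm (fst ((skew p B d ^^ n) x))) (alpha_plus B d))
                  (norm (snd ((skew p B d ^^ n) x)))) / real d ^ n"

lemma logplus_max_bounds:
  fixes x y R a :: real
  assumes "x > R" "R > 1" "0 \<le> y" "y \<le> R * x powr a"
  shows "max a 0 * ln x \<le> logplus (max (rpow x (max a 0)) y)"
    and "logplus (max (rpow x (max a 0)) y) \<le> ln R + max a 0 * ln x"
proof -
  define b where "b = max a 0"
  define M where "M = max (x powr b) y"
  have x1: "x > 1" using assms by simp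
  have b1: "x powr b \<ge> 1" using x1 unfolding b_def by (simp add: ge_one_powr_ge_zero)
  have M1: "M \<ge> 1" unfolding M_def using b1 by simp
  have lhs: "logplus (max (rpow x b) y) = ln M"
    unfolding logplus_def M_def using M1 x1 by (simp add: rpow_def M_def)
  have "ln (x powr b) \<le> ln M" using b1 M1 by (subst ln_le_cancel_iff) (auto simp: M_def)
  then show "max a 0 * ln x \<le> logplus (max (rpow x (max a 0)) y)"
    using lhs x1 by (simp add: ln_powr b_def)
  have "R * x powr a \<le> R * x powr b" using x1 assms(2) unfolding b_def
    by (intro mult_left_mono powr_mono) auto
  moreover have "1 * x powr b \<le> R * x powr b" using assms(2) b1 by (intro mult_right_mono) auto
  ultimately have "M \<le> R * x powr b" unfolding M_def using assms(4) by simp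
  then have "ln M \<le> ln (R * x powr b)" using M1 by simp
  then show "logplus (max (rpow x (max a 0)) y) \<le> ln R + max a 0 * ln x"
    using lhs x1 assms(2) by (simp add: ln_mult ln_powr b_def)
qed

lemma norm_le_off_W_R:
  assumes "(z, w) \<notin> W_R B d R" "R < norm z" "alpha B d = ereal a"
  shows "norm w \<le> R * norm z powr a"
  using assms by (auto simp: W_R_def)

lemma zero_off_W_R:
  assumes "(z, w) \<notin> W_R B d R" "R < norm z" "alpha B d = -\<infinity>"
  shows "w = 0"
  using assms by (auto simp: W_R_def)

lemma orbit_off_A_f:
  assumes "z \<in> escape_set p" "(z, w) \<notin> A_f p B d R"
  shows "\<exists>k. \<forall>n\<ge>k. R < norm ((poly p ^^ n) z) \<and>
           ((poly p ^^ n) z, snd ((skew p B d ^^ n) (z, w))) \<notin> W_R B d R"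
proof -
  have orbit: "(skew p B d ^^ n) (z, w) = ((poly p ^^ n) z, snd ((skew p B d ^^ n) (z, w)))" for n
    by (simp add: prod_eq_iff skew_iter_fst)
  obtain k where "\<forall>n\<ge>k. R + 1 \<le> norm ((poly p ^^ n) z)"
    using escape_set_eventually_ge[OF assms(1)] by blast
  moreover have "((poly p ^^ n) z, snd ((skew p B d ^^ n) (z, w))) \<notin> W_R B d R" for n
    using assms(2) orbit[of n] unfolding A_f_def by (metis UNIV_I UN_I vimageI)
  ultimately show ?thesis by force
qed

(* On B_f the normalized height converges to max(alpha,0) G_p(z): the orbit avoids W_R,
   so |w_n| <= R |z_n|^alpha and the height is squeezed around max(alpha,0) ln|z_n| / d^n;
   when alpha = -infinity, w_n = 0 eventually and the height vanishes. *)
lemma height_limit_on_B_f: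
  assumes "d \<ge> 2" "degree p = d" "lead_coeff p = 1" "R > 1" "z \<in> escape_set p"
    and notA: "(z, w) \<notin> A_f p B d R"
  shows "(\<lambda>n. normalized_height p B d (z, w) n) \<longlonglongrightarrow> alpha_plus B d * green_p p z"
proof -
  define Z where "Z = (\<lambda>n. norm ((poly p ^^ n) z))"
  define W where "W = (\<lambda>n. snd ((skew p B d ^^ n) (z, w)))"
  obtain k where k: "\<forall>n\<ge>k. R < Z n \<and> ((poly p ^^ n) z, W n) \<notin> W_R B d R"
    using orbit_off_A_f[OF assms(5) notA] unfolding Z_def W_def by blast
  have height: "normalized_height p B d (z, w) n
                  = logplus (max (rpow (Z n) (alpha_plus B d)) (norm (W n))) / real d ^ n" for n
    unfolding normalized_height_def Z_def W_def skew_iter_fst by simp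
  show ?thesis
  proof (cases "alpha B d")
    case (real a)
    have ap: "alpha_plus B d = max a 0"
      unfolding alpha_plus_def real by (simp add: max_def zero_ereal_def)
    define G where "G = (\<lambda>n. ln (Z n) / real d ^ n)"
    have d0: "real d > 0" using assms(1) by simp
    have "max a 0 * G n \<le> normalized_height p B d (z, w) n \<and>
            normalized_height p B d (z, w) n \<le> ln R / real d ^ n + max a 0 * G n"
      if "n \<ge> k" for n
    proof -
      have Zn: "R < Z n" and Wn: "norm (W n) \<le> R * Z n powr a"
        using k norm_le_off_W_R[OF _ _ real] that unfolding Z_def by auto
      note bounds = logplus_max_bounds[OF Zn assms(4) norm_ge_zero Wn]
      have "max a 0 * ln (Z n) / real d ^ n
              \<le> logplus (max (rpow (Z n) (max a 0)) (norm (W n))) / real d ^ n"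
        using bounds(1) d0 by (intro divide_right_mono) auto
      moreover have "logplus (max (rpow (Z n) (max a 0)) (norm (W n))) / real d ^ n
              \<le> (ln R + max a 0 * ln (Z n)) / real d ^ n"
        using bounds(2) d0 by (intro divide_right_mono) auto
      ultimately show ?thesis
        unfolding height ap G_def times_divide_eq_right add_divide_distrib by (rule conjI)
    qed
    moreover have "G \<longlonglongrightarrow> green_p p z"
      unfolding G_def Z_def by (rule green_p_limit[OF assms(1-3,5)])
    ultimately have "normalized_height p B d (z, w) \<longlonglongrightarrow> max a 0 * green_p p z"
      using assms(1) by (intro squeeze_with_vanishing_error[where d = "real d" and k = k]) auto
    then show ?thesis unfolding ap .
  next
    case PInf then show ?thesis by (simp add: alpha_def split: if_splits)
  next
    case MInf
    then have ap: "alpha_plus B d = 0" by (simp add: alpha_plus_def)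
    have "W n = 0" if "n \<ge> k" for n
      using k zero_off_W_R[OF _ _ MInf] that unfolding Z_def by auto
    then have "eventually (\<lambda>n. normalized_height p B d (z, w) n = 0) sequentially"
      unfolding eventually_sequentially height ap by (intro exI[of _ k]) (auto simp: rpow_def logplus_def)
    then show ?thesis unfolding ap by (simp add: tendsto_eventually)
  qed
qed

lemma fibre_estimate_along_A_f_orbit:
  assumes deg: "degree (B d) \<ge> 1" and R: "R \<ge> 1" "4 * low_coeff_mass B d \<le> R"
    and lead: "\<And>x. R \<le> norm x \<Longrightarrow> norm x ^ degree (B d) / 2 \<le> norm (poly (B d) x)"
    and invariant: "skew p B d ` W_R B d R \<subseteq> W_R B d R"
    and inA: "(z, w) \<in> A_f p B d R"
  shows "\<exists>k. \<forall>n\<ge>k. R < norm ((poly p ^^ n) z) \<and> snd ((skew p B d ^^ n) (z, w)) \<noteq> 0 \<and>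
           norm ((poly p ^^ n) z) * norm (snd ((skew p B d ^^ n) (z, w))) ^ d / 4
             \<le> norm (snd ((skew p B d ^^ Suc n) (z, w)))"
proof -
  define W where "W = (\<lambda>n. snd ((skew p B d ^^ n) (z, w)))"
  have orbit: "(skew p B d ^^ n) (z, w) = ((poly p ^^ n) z, W n)" for n
    by (simp add: prod_eq_iff W_def skew_iter_fst)
  obtain k where k: "(skew p B d ^^ k) (z, w) \<in> W_R B d R"
    using inA unfolding A_f_def by auto
  have inW: "((poly p ^^ n) z, W n) \<in> W_R B d R" if "n \<ge> k" for n
    using that unfolding orbit[symmetric]
  proof (induction n rule: dec_induct)
    case (step n)
    then show ?case using invariant by auto
  qed (rule k)
  have "R < norm ((poly p ^^ n) z) \<and> W n \<noteq> 0 \<and>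
          norm ((poly p ^^ n) z) * norm (W n) ^ d / 4 \<le> norm (W (Suc n))" if "n \<ge> k" for n
  proof -
    have "W (Suc n) = qfun B d (fst ((skew p B d ^^ n) (z, w))) (snd ((skew p B d ^^ n) (z, w)))"
      unfolding W_def by (rule skew_iter_snd_Suc)
    then have "W (Suc n) = qfun B d ((poly p ^^ n) z) (W n)" unfolding orbit by simp
    then show ?thesis
      using W_R_norms[OF inW[OF that]] qfun_lower_bound[OF deg R lead inW[OF that]] R(1) by simp
  qed
  then show ?thesis unfolding W_def by blast
qed

(* With D = d^n this is the growth of ln|w_n| / d^n along A_f. *)
lemma log_increment_from_fibre_estimate:
  fixes x y y' c D :: real
  assumes "d > 0" "D > 0" "x > 0" "y > 0" "x * y ^ d / 4 \<le> y'"
    and "c * D \<le> ln x" "2 * ln 4 \<le> c * D"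
  shows "ln y / D + c / (2 * real d) \<le> ln y' / (real d * D)"
proof -
  have pos: "x * y ^ d / 4 > 0" using assms(3,4) by simp
  have "ln x + real d * ln y - ln 4 = ln (x * y ^ d / 4)"
    using assms(3,4) by (simp add: ln_div ln_mult ln_realpow)
  also have "\<dots> \<le> ln y'" using assms(5) pos by (subst ln_le_cancel_iff) auto
  finally have "real d * ln y + c * D / 2 \<le> ln y'" using assms(6,7) by linarith
  then have "(real d * ln y + c * D / 2) / (real d * D) \<le> ln y' / (real d * D)"
    using assms(1,2) by (intro divide_right_mono) auto
  then show ?thesis using assms(1,2) by (simp add: field_simps)
qed

lemma ln_le_logplus_max:
  assumes "w \<noteq> 0"
  shows "ln (norm w) \<le> logplus (max t (norm w))"
proof -
  have "ln (norm w) \<le> ln (max t (norm w))"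
    using assms by (subst ln_le_cancel_iff) (auto simp: less_max_iff_disj)
  then show ?thesis unfolding logplus_def by simp
qed

(* On A_f the normalized height tends to infinity: ln|z_n| >= c d^n and the fibre estimate
   make u_n = ln|w_n| / d^n increase by at least c/(2d) per step, and u_n is a lower
   bound for the normalized height. *)
lemma height_limit_on_A_f:
  assumes "d \<ge> 2" "degree p = d" "lead_coeff p = 1" "z \<in> escape_set p"
    and deg: "degree (B d) \<ge> 1" and R: "R \<ge> 1" "4 * low_coeff_mass B d \<le> R"
    and lead: "\<And>x. R \<le> norm x \<Longrightarrow> norm x ^ degree (B d) / 2 \<le> norm (poly (B d) x)"
    and invariant: "skew p B d ` W_R B d R \<subseteq> W_R B d R"
    and inA: "(z, w) \<in> A_f p B d R"
  shows "(\<lambda>n. ereal (normalized_height p B d (z, w) n)) \<longlonglongrightarrow> \<infinity>"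
proof -
  define Z where "Z = (\<lambda>n. norm ((poly p ^^ n) z))"
  define W where "W = (\<lambda>n. snd ((skew p B d ^^ n) (z, w)))"
  obtain k where k: "\<forall>n\<ge>k. R < Z n \<and> W n \<noteq> 0 \<and> Z n * norm (W n) ^ d / 4 \<le> norm (W (Suc n))"
    using fibre_estimate_along_A_f_orbit[OF deg R lead invariant inA] unfolding Z_def W_def by blast
  obtain c k1 where c: "c > 0" "\<forall>n\<ge>k1. c * real d ^ n \<le> ln (Z n)"
    using escaping_orbit_log_growth[OF assms(1-4)] unfolding Z_def by blast
  have "filterlim (\<lambda>n. norm (real d ^ n)) at_top sequentially"
    using assms(1)
    by (intro filterlim_at_infinity_imp_norm_at_top filterlim_realpow_sequentially_gt1) simp
  then obtain k2 where k2: "\<forall>n\<ge>k2. 2 * ln 4 / c \<le> real d ^ n"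
    by (auto simp: filterlim_at_top eventually_sequentially)
  define N where "N = max k (max k1 k2)"
  define u where "u = (\<lambda>n. ln (norm (W n)) / real d ^ n)"
  have d0: "real d > 0" using assms(1) by simp
  have increment: "u n + c / (2 * real d) \<le> u (Suc n)" if n: "n \<ge> N" for n
  proof -
    have "c * (2 * ln 4 / c) \<le> c * real d ^ n"
      using k2 n c(1) unfolding N_def by (intro mult_left_mono) auto
    then have "2 * ln 4 \<le> c * real d ^ n" using c(1) by simp
    then show ?thesis
      using log_increment_from_fibre_estimate[of d "real d ^ n" "Z n" "norm (W n)"] k c(2) n R(1) d0
      unfolding u_def N_def by auto
  qed
  have "c / (2 * real d) > 0" using c(1) d0 by simp
  then have "filterlim u at_top sequentially"
    using increment by (rule tendsto_at_top_of_uniform_increments)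
  moreover have "u n \<le> normalized_height p B d (z, w) n" if "n \<ge> N" for n
    using ln_le_logplus_max[of "W n"] k that d0
    unfolding u_def normalized_height_def W_def N_def by (auto intro: divide_right_mono)
  ultimately have "filterlim (normalized_height p B d (z, w)) at_top sequentially"
    by (elim filterlim_at_top_mono) (auto simp: eventually_sequentially)
  then show ?thesis by (simp add: tendsto_PInfty_eq_at_top)
qed

(* The threshold R0 makes both the leading-coefficient bound and
   the domination of the lower-order part of q available on W_R. *)
theorem corollary6p9:
  fixes p :: "complex poly" and B :: "nat \<Rightarrow> complex poly" and d :: nat
  assumes "d \<ge> 2"
    and "degree p = d" and "lead_coeff p = 1"
    and "lead_coeff (B d) = 1" and "degree (B d) \<ge> 1"
  shows "\<exists>R0. \<forall>R \<ge> R0. R > 1 \<and> skew p B d ` W_R B d R \<subseteq> W_R B d R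
            \<and> W_R B d R \<subseteq> escape_set p \<times> UNIV \<longrightarrow>
     (\<forall>z w. z \<in> escape_set p \<longrightarrow>
        ((\<lambda>n. ereal (logplus (max (rpow (norm (fst ((skew p B d ^^ n) (z, w)))) (alpha_plus B d))
                                     (norm (snd ((skew p B d ^^ n) (z, w))))) / real d ^ n))
          \<longlonglongrightarrow> (if (z, w) \<in> A_f p B d R then \<infinity>
                else ereal (alpha_plus B d * green_p p z))))"
proof -
  obtain Rb where Rb: "\<And>x. Rb \<le> norm x \<Longrightarrow> norm x ^ degree (B d) / 2 \<le> norm (poly (B d) x)"
    using monic_poly_comparable_to_power[OF assms(4) refl assms(5)] by blast
  show ?thesis
    unfolding normalized_height_def[symmetric]
  proof (intro exI[of _ "max Rb (4 * low_coeff_mass B d)"] allI impI)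
    fix R z w
    assume R: "max Rb (4 * low_coeff_mass B d) \<le> R"
      and hyps: "R > 1 \<and> skew p B d ` W_R B d R \<subseteq> W_R B d R \<and> W_R B d R \<subseteq> escape_set p \<times> UNIV"
      and z: "z \<in> escape_set p"
    have R1: "1 \<le> R" and R4: "4 * low_coeff_mass B d \<le> R"
      and invariant: "skew p B d ` W_R B d R \<subseteq> W_R B d R"
      using R hyps by auto
    have lead: "norm x ^ degree (B d) / 2 \<le> norm (poly (B d) x)" if "R \<le> norm x" for x
      using Rb R that by auto
    show "(\<lambda>n. ereal (normalized_height p B d (z, w) n))
            \<longlonglongrightarrow> (if (z, w) \<in> A_f p B d R then \<infinity> else ereal (alpha_plus B d * green_p p z))"
    proof (cases "(z, w) \<in> A_f p B d R")
      case True
      then show ?thesis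
        using height_limit_on_A_f[OF assms(1-3) z assms(5) R1 R4 lead invariant True] by simp
    next
      case False
      then show ?thesis
        using height_limit_on_B_f[OF assms(1-3) _ z False] hyps by (simp add: tendsto_ereal)
    qed
  qed
qed

end
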